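(* Consider integers $0=z_0\le z_1\le\cdots\le z_k\le z_{k+1}=k$ with $z_i\ge i-1$ for all $i\in\{1,\dots,k\}$. Let $\mathbf{a}=(a_1,\dots,a_k)\in\mathbb{N}^k$ with $a_1\cdots a_k$ squarefree. Then $$L^{(k+1)}(\mathbf{a})\le\sum_{\substack{d_j\mid a_j\\1\le j\le k}}\left(\prod_{j=1}^k(z_j-j+1)^{\omega(d_j)}\right)\min\left\{\prod_{j=0}^k\log^{z_{j+1}-z_j}(2a_1\cdots a_j),\ (\log2)^k\prod_{j=1}^k(k-z_j+1)^{\omega(a_j/d_j)}\right\},$$ with the convention $0^0=1$ (and the empty product $a_1\cdots a_0=1$).
   Context: For $\mathbf{a}\in\mathbb{N}^k$, $L^{(k+1)}(\mathbf{a})$ is the $k$-dimensional Lebesgue measure of $\bigcup[\log(d_1/2),\log d_1)\times\cdots\times[\log(d_k/2),\log d_k)$ over all $(d_1,\dots,d_k)\in\mathbb{N}^k$ with $d_1\cdots d_i\mid a_1\cdots a_i$ for $1\le i\le k$. $\omega(n)$ is the number of distinct prime factors of $n$. *)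

theory Defs
  imports "HOL-Analysis.Analysis" "HOL-Computational_Algebra.Computational_Algebra"
begin

definition omega :: "nat \<Rightarrow> nat" where
  "omega n = card (prime_factors n)"

text \<open>Vectors in R^k are functions nat => real on the index set {1..k}
  (extensional, as in PiM); the k-dimensional Lebesgue measure is the
  product measure PiM {1..k} (\<lambda>_. lborel).\<close>
definition admissible_d :: "nat \<Rightarrow> (nat \<Rightarrow> nat) \<Rightarrow> (nat \<Rightarrow> nat) set" where
  "admissible_d k a = {d \<in> {1..k} \<rightarrow>\<^sub>E {1..}.
      \<forall>i\<in>{1..k}. (\<Prod>j=1..i. d j) dvd (\<Prod>j=1..i. a j)}"

definition Lk :: "nat \<Rightarrow> (nat \<Rightarrow> nat) \<Rightarrow> real" where
  "Lk k a = measure (PiM {1..k} (\<lambda>_. lborel))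
     (\<Union>d\<in>admissible_d k a.
        PiE {1..k} (\<lambda>i. {ln (real (d i) / 2) ..< ln (real (d i))}))"

end

theory Submission
  imports Defs
begin

text \<open>
  Since a_1\<cdots>a_k is squarefree, every prime p of it divides exactly one a_j(p), and an
  admissible tuple d is the same thing as a map f sending each such p to the index i with
  p | d_i (or to k+1 if p divides no d_i), subject only to f(p) \<ge> j(p). Sort these maps by
  their type t, where t_j is the product of the primes p | a_j with f(p) \<le> z_j.
  The maps of type t number \<Prod>(z_j-j+1)^\<omega>(t_j) (k-z_j+1)^\<omega>(a_j/t_j), and each
  contributes a box of volume (log 2)^k. On the other hand, the primes with f(p) > z_j(p)
  landing in coordinate i all divide a_1\<cdots>a_m for the largest m with z_m < i. So once f is
  fixed on the remaining primes (\<Prod>(z_j-j+1)^\<omega>(t_j) choices), the boxes lie in a single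
  box whose side in coordinate i is log(2a_1\<cdots>a_m), and the product of these sides is
  \<Prod>_j log^(z_j+1 - z_j)(2a_1\<cdots>a_j). Either bound applies to each type; summing over t
  gives the theorem.
\<close>

section \<open>Squarefree numbers and their prime factors\<close>

lemma prod_primes_dvd:
  fixes n :: nat
  assumes "finite Q" "\<And>q. q \<in> Q \<Longrightarrow> prime q" "\<And>q. q \<in> Q \<Longrightarrow> q dvd n"
  shows "\<Prod>Q dvd n"
  using assms
proof (induction Q rule: finite_induct)
  case empty
  then show ?case by simp
next
  case (insert q Q)
  have "prime q" using insert.prems by simp
  have "\<not> q dvd \<Prod>Q"
  proof
    assume "q dvd \<Prod>Q"
    then obtain r where "r \<in> Q" "q dvd r"
      using prime_dvd_prod_iff[OF insert.hyps(1) \<open>prime q\<close>, of id] by auto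
    then have "q = r" using primes_dvd_imp_eq \<open>prime q\<close> insert.prems by blast
    with \<open>r \<in> Q\<close> \<open>q \<notin> Q\<close> show False by simp
  qed
  then have "coprime q (\<Prod>Q)" using prime_imp_coprime \<open>prime q\<close> by blast
  then show ?case using insert by (simp add: divides_mult)
qed

lemma prime_dvd_prod_primes_iff:
  fixes p :: nat
  assumes "finite Q" "\<And>q. q \<in> Q \<Longrightarrow> prime q" "prime p"
  shows "p dvd \<Prod>Q \<longleftrightarrow> p \<in> Q"
proof
  assume "p dvd \<Prod>Q"
  then obtain r where "r \<in> Q" "p dvd r"
    using prime_dvd_prod_iff[OF assms(1) assms(3), of id] by auto
  then show "p \<in> Q" using primes_dvd_imp_eq assms by blast
next
  assume "p \<in> Q"
  then show "p dvd \<Prod>Q" using assms(1) dvd_prodI[of Q p "\<lambda>x. x"] by simp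
qed

lemma prod_prime_factors_squarefree:
  fixes n :: nat
  assumes "squarefree n"
  shows "\<Prod>(prime_factors n) = n"
proof -
  have "n \<noteq> 0" using assms by (metis not_squarefree_0)
  have "multiplicity p n = 1" if "p \<in> prime_factors n" for p
  proof -
    have "prime p" "p dvd n" using that by auto
    then have "multiplicity p n > 0" using \<open>n \<noteq> 0\<close> by (simp add: prime_multiplicity_gt_zero_iff)
    moreover have "multiplicity p n \<le> 1"
      using squarefree_factorial_semiring''[OF \<open>n \<noteq> 0\<close>] assms \<open>prime p\<close> by blast
    ultimately show ?thesis by simp
  qed
  then have "\<Prod>(prime_factors n) = (\<Prod>p \<in> prime_factors n. p ^ multiplicity p n)"
    by (intro prod.cong) auto
  also have "\<dots> = n" using prod_prime_factors[OF \<open>n \<noteq> 0\<close>] by simp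
  finally show ?thesis .
qed

lemma squarefree_prod_prime_dvd_unique:
  fixes f :: "'a \<Rightarrow> nat"
  assumes "finite I" "squarefree (prod f I)" "i \<in> I" "j \<in> I"
    and "prime p" "p dvd f i" "p dvd f j"
  shows "i = j"
proof (rule ccontr)
  assume "i \<noteq> j"
  have "prod f I = f i * prod f (I - {i})" using assms by (simp add: prod.remove)
  also have "prod f (I - {i}) = f j * prod f (I - {i} - {j})"
    using assms \<open>i \<noteq> j\<close> by (intro prod.remove) auto
  finally have "f i * f j dvd prod f I" by simp
  moreover have "p ^ 2 dvd f i * f j" using assms(6,7) by (simp add: power2_eq_square mult_dvd_mono)
  ultimately have "p dvd 1" using squarefreeD[OF assms(2)] dvd_trans by blast
  with \<open>prime p\<close> show False by simp
qed

lemma prime_factors_div_squarefree: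
  fixes n t :: nat
  assumes "squarefree n" "t dvd n"
  shows "prime_factors (n div t) = {p \<in> prime_factors n. \<not> p dvd t}"
proof (intro set_eqI iffI)
  have "n \<noteq> 0" using assms by (metis not_squarefree_0)
  have n_eq: "n = t * (n div t)" using assms(2) by simp
  with \<open>n \<noteq> 0\<close> have "n div t \<noteq> 0" by (metis mult_0_right)
  fix p
  {
    assume "p \<in> prime_factors (n div t)"
    then have "prime p" "p dvd n div t" by auto
    then have "p dvd n" using n_eq by (metis dvd_mult)
    moreover have "\<not> p dvd t"
    proof
      assume "p dvd t"
      then have "p ^ 2 dvd n" using \<open>p dvd n div t\<close> n_eq by (metis mult_dvd_mono power2_eq_square)
      then show False using squarefreeD[OF assms(1)] \<open>prime p\<close> by (metis not_prime_unit)
    qed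
    ultimately show "p \<in> {p \<in> prime_factors n. \<not> p dvd t}"
      using \<open>prime p\<close> \<open>n \<noteq> 0\<close> by (auto intro: prime_factorsI)
  next
    assume "p \<in> {p \<in> prime_factors n. \<not> p dvd t}"
    then have "prime p" "p dvd t * (n div t)" "\<not> p dvd t" using n_eq by auto
    then have "p dvd n div t" using prime_dvd_mult_iff by blast
    then show "p \<in> prime_factors (n div t)"
      using \<open>n div t \<noteq> 0\<close> \<open>prime p\<close> by (auto intro: prime_factorsI)
  }
qed

section \<open>Products over blocks and volumes of boxes\<close>

lemma prod_consecutive_blocks:
  fixes Z :: "nat \<Rightarrow> nat" and g :: "nat \<Rightarrow> 'a :: comm_monoid_mult"
  assumes "\<And>j. j \<le> n \<Longrightarrow> Z j \<le> Z (Suc j)"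
  shows "(\<Prod>i\<in>{Z 0<..Z (Suc n)}. g i) = (\<Prod>j\<le>n. \<Prod>i\<in>{Z j<..Z (Suc j)}. g i)"
  using assms
proof (induction n)
  case 0
  then show ?case by simp
next
  case (Suc n)
  have "Z 0 \<le> Z (Suc n)"
    by (rule lift_Suc_mono_le_ivl[of "{..n}" Z 0 "Suc n"]) (use Suc.prems in auto)
  then have "{Z 0<..Z (Suc (Suc n))} = {Z 0<..Z (Suc n)} \<union> {Z (Suc n)<..Z (Suc (Suc n))}"
    using Suc.prems[of "Suc n"] by auto
  then have "(\<Prod>i\<in>{Z 0<..Z (Suc (Suc n))}. g i)
      = (\<Prod>i\<in>{Z 0<..Z (Suc n)}. g i) * (\<Prod>i\<in>{Z (Suc n)<..Z (Suc (Suc n))}. g i)"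
    by (simp add: prod.union_disjoint)
  with Suc show ?case by simp
qed

lemma measure_PiM_lborel_box:
  fixes l u :: "'i \<Rightarrow> real"
  assumes "finite I" "\<And>i. i \<in> I \<Longrightarrow> l i \<le> u i"
  shows "PiE I (\<lambda>i. {l i..<u i}) \<in> fmeasurable (PiM I (\<lambda>_. lborel))"
    and "measure (PiM I (\<lambda>_. lborel)) (PiE I (\<lambda>i. {l i..<u i})) = (\<Prod>i\<in>I. u i - l i)"
proof -
  interpret product_sigma_finite "\<lambda>_. lborel :: real measure" by standard
  have "emeasure (PiM I (\<lambda>_. lborel)) (PiE I (\<lambda>i. {l i..<u i}))
      = (\<Prod>i\<in>I. emeasure lborel {l i..<u i})"
    using assms(1) by (intro emeasure_PiM) auto
  also have "\<dots> = (\<Prod>i\<in>I. ennreal (u i - l i))" using assms(2) by (intro prod.cong) auto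
  also have "\<dots> = ennreal (\<Prod>i\<in>I. u i - l i)" using assms(2) by (intro prod_ennreal) auto
  finally have eq: "emeasure (PiM I (\<lambda>_. lborel)) (PiE I (\<lambda>i. {l i..<u i})) = ennreal (\<Prod>i\<in>I. u i - l i)" .
  show "PiE I (\<lambda>i. {l i..<u i}) \<in> fmeasurable (PiM I (\<lambda>_. lborel))"
    using assms(1) eq by (intro fmeasurableI sets_PiM_I_finite) auto
  show "measure (PiM I (\<lambda>_. lborel)) (PiE I (\<lambda>i. {l i..<u i})) = (\<Prod>i\<in>I. u i - l i)"
    using eq assms(2) by (simp add: measure_def prod_nonneg)
qed

text \<open>No measurability of S is needed: a non-measurable set has measure 0.\<close>

lemma measure_le_sum_of_cover:
  assumes "finite I" "S \<subseteq> (\<Union>i\<in>I. B i)" "\<And>i. i \<in> I \<Longrightarrow> B i \<in> fmeasurable M"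
  shows "measure M S \<le> (\<Sum>i\<in>I. measure M (B i))"
proof -
  have "(\<Union>i\<in>I. B i) \<in> fmeasurable M" using assms(1,3) by (intro fmeasurable.finite_UN)
  then have "measure M S \<le> measure M (\<Union>i\<in>I. B i)"
    unfolding measure_def using assms(2)
    by (intro enn2real_mono emeasure_mono) (auto simp: fmeasurable_def)
  also have "\<dots> \<le> (\<Sum>i\<in>I. measure M (B i))" using assms(1,3) by (intro measure_UNION_le) auto
  finally show ?thesis .
qed

section \<open>Admissible tuples as assignments of primes to coordinates\<close>

locale squarefree_tuple =
  fixes k :: nat and a :: "nat \<Rightarrow> nat"
  assumes a_pos: "\<And>j. j \<in> {1..k} \<Longrightarrow> 0 < a j"
    and squarefree_prod_a: "squarefree (\<Prod>j=1..k. a j)"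
begin

definition A :: "nat \<Rightarrow> nat" where
  "A i = (\<Prod>j=1..i. a j)"

definition P :: "nat set" where
  "P = prime_factors (A k)"

definition idx :: "nat \<Rightarrow> nat" where
  "idx p = (THE j. j \<in> {1..k} \<and> p dvd a j)"

definition divisor_tuples :: "(nat \<Rightarrow> nat) set" where
  "divisor_tuples = PiE {1..k} (\<lambda>j. {e. e dvd a j})"

definition prime_tuple :: "nat set \<Rightarrow> (nat \<Rightarrow> nat) \<Rightarrow> nat \<Rightarrow> nat" where
  "prime_tuple Q f i = \<Prod>{p \<in> Q. f p = i}"

text \<open>
  The inverse of prime_tuple P: for admissible d it sends a prime p to the index i
  with p | d_i, or to k+1 if p divides no d_i.
\<close>

definition assignment :: "(nat \<Rightarrow> nat) \<Rightarrow> nat \<Rightarrow> nat" where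
  "assignment d = restrict
     (\<lambda>p. if \<exists>i\<in>{1..k}. p dvd d i then THE i. i \<in> {1..k} \<and> p dvd d i else Suc k) P"

definition box :: "(nat \<Rightarrow> nat) \<Rightarrow> (nat \<Rightarrow> real) set" where
  "box d = PiE {1..k} (\<lambda>i. {ln (real (d i) / 2)..<ln (real (d i))})"

abbreviation Leb :: "(nat \<Rightarrow> real) measure" where
  "Leb \<equiv> PiM {1..k} (\<lambda>_. lborel)"

lemma Lk_eq: "Lk k a = measure Leb (\<Union>d\<in>admissible_d k a. box d)"
  unfolding Lk_def box_def ..

lemma A_pos: "i \<le> k \<Longrightarrow> 0 < A i"
  unfolding A_def using a_pos by (intro prod_pos) auto

lemma A_ge_1: "i \<le> k \<Longrightarrow> 1 \<le> real (A i)"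
  using A_pos[of i] by (simp add: Suc_le_eq)

lemma a_dvd_A: "1 \<le> j \<Longrightarrow> j \<le> i \<Longrightarrow> a j dvd A i"
  unfolding A_def by (intro dvd_prodI) auto

lemma squarefree_a: "j \<in> {1..k} \<Longrightarrow> squarefree (a j)"
  using squarefree_mono[OF a_dvd_A[of j k]] squarefree_prod_a unfolding A_def by auto

lemma finite_P [simp]: "finite P"
  unfolding P_def by simp

lemma prime_of_P: "p \<in> P \<Longrightarrow> prime p"
  unfolding P_def by auto

lemma idx_eqI:
  assumes "prime p" "j \<in> {1..k}" "p dvd a j"
  shows "idx p = j"
  unfolding idx_def
proof (rule the_equality)
  show "j \<in> {1..k} \<and> p dvd a j" using assms by simp
next
  fix j' assume "j' \<in> {1..k} \<and> p dvd a j'"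
  then show "j' = j"
    using squarefree_prod_prime_dvd_unique[of "{1..k}" a j' j p] assms squarefree_prod_a by auto
qed

lemma idx_exists: "p \<in> P \<Longrightarrow> \<exists>j\<in>{1..k}. p dvd a j"
  using prime_dvd_prod_iff[of "{1..k}" p a] prime_of_P[of p] unfolding P_def A_def by auto

lemma idx_in_range: "p \<in> P \<Longrightarrow> idx p \<in> {1..k}"
  using idx_exists idx_eqI prime_of_P by metis

lemma dvd_a_idx: "p \<in> P \<Longrightarrow> p dvd a (idx p)"
  using idx_exists idx_eqI prime_of_P by metis

lemma prime_factors_a_iff:
  assumes "j \<in> {1..k}"
  shows "p \<in> prime_factors (a j) \<longleftrightarrow> p \<in> P \<and> idx p = j"
proof
  assume p: "p \<in> prime_factors (a j)"
  then have "p dvd A k" using a_dvd_A[of j k] assms by (auto intro: dvd_trans)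
  then have "p \<in> P" unfolding P_def using p A_pos[of k] by (auto intro: prime_factorsI)
  then show "p \<in> P \<and> idx p = j" using idx_eqI assms p by auto
next
  assume "p \<in> P \<and> idx p = j"
  then show "p \<in> prime_factors (a j)"
    using dvd_a_idx[of p] prime_of_P a_pos[OF assms] by (auto intro: prime_factorsI)
qed

lemma P_eq_UN: "P = (\<Union>j\<in>{1..k}. prime_factors (a j))"
  using prime_factors_a_iff idx_in_range by blast

lemma prod_P_by_idx:
  fixes c1 c2 :: "nat \<Rightarrow> 'b :: comm_monoid_mult"
  assumes "t \<in> divisor_tuples"
  shows "(\<Prod>p\<in>P. if p dvd t (idx p) then c1 (idx p) else c2 (idx p))
       = (\<Prod>j=1..k. c1 j ^ omega (t j) * c2 j ^ omega (a j div t j))"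
proof -
  have "(\<Prod>p\<in>P. if p dvd t (idx p) then c1 (idx p) else c2 (idx p))
      = (\<Prod>j\<in>{1..k}. \<Prod>p\<in>prime_factors (a j). if p dvd t j then c1 j else c2 j)"
    unfolding P_eq_UN
    by (subst prod.UNION_disjoint) (auto simp: prime_factors_a_iff intro!: prod.cong)
  also have "\<dots> = (\<Prod>j=1..k. c1 j ^ omega (t j) * c2 j ^ omega (a j div t j))"
  proof (rule prod.cong[OF refl])
    fix j assume j: "j \<in> {1..k}"
    have "t j dvd a j" using assms j unfolding divisor_tuples_def by auto
    have "(\<Prod>p\<in>prime_factors (a j). if p dvd t j then c1 j else c2 j)
        = c1 j ^ card (prime_factors (a j) \<inter> {p. p dvd t j})
          * c2 j ^ card (prime_factors (a j) \<inter> - {p. p dvd t j})"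
      by (simp add: prod.If_cases)
    also have "prime_factors (a j) \<inter> {p. p dvd t j} = prime_factors (t j)"
      using a_pos[OF j] \<open>t j dvd a j\<close> by (auto simp: in_prime_factors_iff intro: dvd_trans)
    also have "prime_factors (a j) \<inter> - {p. p dvd t j} = prime_factors (a j div t j)"
      using prime_factors_div_squarefree[OF squarefree_a[OF j] \<open>t j dvd a j\<close>] by auto
    finally show "(\<Prod>p\<in>prime_factors (a j). if p dvd t j then c1 j else c2 j)
        = c1 j ^ omega (t j) * c2 j ^ omega (a j div t j)"
      by (simp add: omega_def)
  qed
  finally show ?thesis .
qed

lemma finite_divisor_tuples: "finite divisor_tuples"
  unfolding divisor_tuples_def using a_pos
  by (intro finite_PiE) (auto intro: finite_divisors_nat)

lemma prime_tuple_pos: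
  assumes "Q \<subseteq> P"
  shows "0 < prime_tuple Q f i"
  unfolding prime_tuple_def
proof (intro prod_pos)
  fix p assume "p \<in> {p \<in> Q. f p = i}"
  then show "0 < p" using assms prime_of_P prime_gt_0_nat by blast
qed

lemma admissible_pos:
  assumes "d \<in> admissible_d k a" "i \<in> {1..k}"
  shows "0 < d i"
proof -
  have "d \<in> {1..k} \<rightarrow>\<^sub>E {1..}" using assms(1) unfolding admissible_d_def by simp
  then have "d i \<in> {1..}" using assms(2) by (rule PiE_mem)
  then show ?thesis by simp
qed

lemma admissible_prod_dvd_A:
  "d \<in> admissible_d k a \<Longrightarrow> i \<in> {1..k} \<Longrightarrow> (\<Prod>j=1..i. d j) dvd A i"
  unfolding admissible_d_def A_def by auto

lemma squarefree_prod_admissible: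
  assumes "d \<in> admissible_d k a"
  shows "squarefree (\<Prod>j=1..k. d j)"
proof (cases "k = 0")
  case False
  then have "(\<Prod>j=1..k. d j) dvd A k" using admissible_prod_dvd_A[OF assms, of k] by simp
  then show ?thesis using squarefree_mono squarefree_prod_a unfolding A_def by blast
qed simp

lemma admissible_prime_dvd:
  assumes "d \<in> admissible_d k a" "i \<in> {1..k}" "prime p" "p dvd d i"
  shows "p \<in> P" and "idx p \<le> i"
proof -
  have "d i dvd (\<Prod>j=1..i. d j)" using assms(2) by (intro dvd_prodI) auto
  then have "p dvd A i" using assms(4) admissible_prod_dvd_A[OF assms(1,2)] by (meson dvd_trans)
  then obtain j where j: "j \<in> {1..i}" "p dvd a j"
    using prime_dvd_prod_iff[of "{1..i}" p a] assms(3) unfolding A_def by auto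
  moreover have "idx p = j" using j assms(2,3) by (intro idx_eqI) auto
  ultimately show "idx p \<le> i" by simp
  have "p dvd A k" using j assms(2) a_dvd_A[of j k] by (auto intro: dvd_trans)
  then show "p \<in> P" unfolding P_def using assms(3) A_pos[of k] by (auto intro: prime_factorsI)
qed

lemma assignment_eqI:
  assumes "d \<in> admissible_d k a" "i \<in> {1..k}" "prime p" "p dvd d i"
  shows "assignment d p = i"
proof -
  have "(THE i. i \<in> {1..k} \<and> p dvd d i) = i"
  proof (rule the_equality)
    fix i' assume "i' \<in> {1..k} \<and> p dvd d i'"
    then show "i' = i"
      using squarefree_prod_prime_dvd_unique[OF finite_atLeastAtMost
          squarefree_prod_admissible[OF assms(1)], of i' i p] assms by auto
  qed (use assms in simp)
  then show ?thesis
    unfolding assignment_def using assms admissible_prime_dvd(1)[OF assms] by auto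
qed

lemma assignment_extensional: "assignment d \<in> extensional P"
  unfolding assignment_def by simp

lemma assignment_bounds:
  assumes "d \<in> admissible_d k a" "p \<in> P"
  shows "idx p \<le> assignment d p" and "assignment d p \<le> Suc k"
proof -
  have "idx p \<le> assignment d p \<and> assignment d p \<le> Suc k"
  proof (cases "\<exists>i\<in>{1..k}. p dvd d i")
    case True
    then obtain i where "i \<in> {1..k}" "p dvd d i" by blast
    then show ?thesis
      using assignment_eqI admissible_prime_dvd(2) assms prime_of_P by fastforce
  next
    case False
    then show ?thesis using assms(2) idx_in_range[OF assms(2)] by (simp add: assignment_def)
  qed
  then show "idx p \<le> assignment d p" "assignment d p \<le> Suc k" by auto
qed

lemma prime_tuple_assignment:
  assumes "d \<in> admissible_d k a" "i \<in> {1..k}"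
  shows "prime_tuple P (assignment d) i = d i"
proof -
  have "{p \<in> P. assignment d p = i} = prime_factors (d i)"
  proof (intro equalityI subsetI)
    fix p assume p: "p \<in> {p \<in> P. assignment d p = i}"
    show "p \<in> prime_factors (d i)"
    proof (cases "\<exists>i'\<in>{1..k}. p dvd d i'")
      case True
      then obtain i' where "i' \<in> {1..k}" "p dvd d i'" by blast
      moreover from this have "i' = i" using assignment_eqI assms p prime_of_P by fastforce
      ultimately show ?thesis
        using prime_of_P p admissible_pos[OF assms] by (auto intro: prime_factorsI)
    next
      case False
      then have "assignment d p = Suc k" using p by (simp add: assignment_def)
      then show ?thesis using p assms(2) by auto
    qed
  next
    fix p assume "p \<in> prime_factors (d i)"
    then have "prime p" "p dvd d i" by auto
    then show "p \<in> {p \<in> P. assignment d p = i}"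
      using admissible_prime_dvd(1) assignment_eqI assms by blast
  qed
  moreover have "squarefree (d i)"
    using squarefree_mono[OF _ squarefree_prod_admissible[OF assms(1)]] assms(2)
    by (metis dvd_prodI finite_atLeastAtMost)
  ultimately show ?thesis unfolding prime_tuple_def using prod_prime_factors_squarefree by simp
qed

lemma measure_box:
  assumes "\<And>i. i \<in> {1..k} \<Longrightarrow> 0 < d i"
  shows "box d \<in> fmeasurable Leb" and "measure Leb (box d) = ln 2 ^ k"
proof -
  have len: "ln (real (d i)) - ln (real (d i) / 2) = ln 2" if "i \<in> {1..k}" for i
    using assms[OF that] by (simp add: ln_div)
  have "0 < ln (2 :: real)" by simp
  then have le: "ln (real (d i) / 2) \<le> ln (real (d i))" if "i \<in> {1..k}" for i
    using len[OF that] by linarith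
  then show "box d \<in> fmeasurable Leb"
    unfolding box_def by (intro measure_PiM_lborel_box) auto
  have "measure Leb (box d) = (\<Prod>i\<in>{1..k}. ln (real (d i)) - ln (real (d i) / 2))"
    unfolding box_def using le by (intro measure_PiM_lborel_box) auto
  also have "\<dots> = ln 2 ^ k" using len by simp
  finally show "measure Leb (box d) = ln 2 ^ k" .
qed

end

section \<open>The two volume bounds\<close>

text \<open>
  Z is the sequence z taken in nat, so Z j + 1 - j and Suc k - Z j below are truncated
  differences; they agree with the integer ones under the hypotheses of the theorem
  (see Lk_le_int).
\<close>

locale squarefree_tuple_thresholds = squarefree_tuple +
  fixes Z :: "nat \<Rightarrow> nat"
  assumes Z_0: "Z 0 = 0" and Z_Suc_k: "Z (Suc k) = k"
    and Z_mono: "\<And>i. i \<le> k \<Longrightarrow> Z i \<le> Z (Suc i)"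
begin

text \<open>
  The maps of type t: f p \<le> Z (idx p) holds exactly for the prime factors p of t (idx p).
\<close>

definition assignments :: "(nat \<Rightarrow> nat) \<Rightarrow> (nat \<Rightarrow> nat) set" where
  "assignments t = PiE P (\<lambda>p. if p dvd t (idx p) then {idx p..Z (idx p)} else {Suc (Z (idx p))..Suc k})"

definition low_primes :: "(nat \<Rightarrow> nat) \<Rightarrow> nat set" where
  "low_primes t = {p \<in> P. p dvd t (idx p)}"

definition low_assignments :: "(nat \<Rightarrow> nat) \<Rightarrow> (nat \<Rightarrow> nat) set" where
  "low_assignments t = PiE (low_primes t) (\<lambda>p. {idx p..Z (idx p)})"

definition level :: "nat \<Rightarrow> nat" where
  "level i = (GREATEST j. j \<le> k \<and> Z j < i)"

definition wide_box :: "(nat \<Rightarrow> nat) \<Rightarrow> (nat \<Rightarrow> real) set" where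
  "wide_box s = PiE {1..k} (\<lambda>i. {ln (real (s i)) - ln 2..<ln (real (s i)) + ln (real (A (level i)))})"

definition log_volume :: real where
  "log_volume = (\<Prod>j=0..k. ln (2 * real (A j)) ^ (Z (Suc j) - Z j))"

lemma Z_le_Z: "i \<le> j \<Longrightarrow> j \<le> Suc k \<Longrightarrow> Z i \<le> Z j"
  by (rule lift_Suc_mono_le_ivl[of "{..k}" Z i j]) (use Z_mono in auto)

lemma finite_low_primes [simp]: "finite (low_primes t)"
  unfolding low_primes_def by simp

lemma finite_assignments: "finite (assignments t)"
  unfolding assignments_def by (intro finite_PiE) auto

lemma finite_low_assignments: "finite (low_assignments t)"
  unfolding low_assignments_def low_primes_def by (intro finite_PiE) auto

lemma card_assignments:
  assumes "t \<in> divisor_tuples"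
  shows "card (assignments t) = (\<Prod>j=1..k. (Z j + 1 - j) ^ omega (t j) * (Suc k - Z j) ^ omega (a j div t j))"
proof -
  have "card (assignments t) = (\<Prod>p\<in>P. if p dvd t (idx p) then Z (idx p) + 1 - idx p else Suc k - Z (idx p))"
    unfolding assignments_def by (simp add: card_PiE if_distrib[of card] cong: if_cong)
  then show ?thesis using prod_P_by_idx[OF assms, of "\<lambda>j. Z j + 1 - j" "\<lambda>j. Suc k - Z j"] by simp
qed

lemma card_low_assignments:
  assumes "t \<in> divisor_tuples"
  shows "card (low_assignments t) = (\<Prod>j=1..k. (Z j + 1 - j) ^ omega (t j))"
proof -
  have "card (low_assignments t) = (\<Prod>p\<in>low_primes t. Z (idx p) + 1 - idx p)"
    unfolding low_assignments_def low_primes_def by (simp add: card_PiE)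
  also have "\<dots> = (\<Prod>p\<in>P. if p dvd t (idx p) then Z (idx p) + 1 - idx p else 1)"
    unfolding low_primes_def by (rule prod.inter_filter) simp
  also have "\<dots> = (\<Prod>j=1..k. (Z j + 1 - j) ^ omega (t j) * 1 ^ omega (a j div t j))"
    by (rule prod_P_by_idx[OF assms])
  finally show ?thesis by simp
qed

lemma assignment_type:
  assumes "f \<in> extensional P" "\<And>p. p \<in> P \<Longrightarrow> idx p \<le> f p \<and> f p \<le> Suc k"
  shows "\<exists>t\<in>divisor_tuples. f \<in> assignments t"
proof
  define t where "t = restrict (\<lambda>j. \<Prod>{q \<in> prime_factors (a j). f q \<le> Z j}) {1..k}"
  show "t \<in> divisor_tuples"
    unfolding divisor_tuples_def t_def by (auto intro!: prod_primes_dvd)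
  show "f \<in> assignments t"
    unfolding assignments_def
  proof (rule PiE_I)
    fix p assume p: "p \<in> P"
    have j: "idx p \<in> {1..k}" using idx_in_range[OF p] .
    have "p \<in> prime_factors (a (idx p))" using prime_factors_a_iff[OF j] p by simp
    moreover have "p dvd t (idx p) \<longleftrightarrow> p \<in> {q \<in> prime_factors (a (idx p)). f q \<le> Z (idx p)}"
      unfolding t_def restrict_apply'[OF j] using prime_of_P[OF p]
      by (intro prime_dvd_prod_primes_iff) auto
    ultimately show "f p \<in> (if p dvd t (idx p) then {idx p..Z (idx p)} else {Suc (Z (idx p))..Suc k})"
      using assms(2)[OF p] by auto
  qed (use assms(1) in \<open>auto simp: extensional_def\<close>)
qed

lemma admissible_boxes_covered:
  "(\<Union>d\<in>admissible_d k a. box d) \<subseteq> (\<Union>t\<in>divisor_tuples. \<Union>f\<in>assignments t. box (prime_tuple P f))"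
proof
  fix x assume "x \<in> (\<Union>d\<in>admissible_d k a. box d)"
  then obtain d where d: "d \<in> admissible_d k a" "x \<in> box d" by blast
  have "box d = box (prime_tuple P (assignment d))"
    unfolding box_def using prime_tuple_assignment[OF d(1)] by (intro PiE_cong) simp
  moreover obtain t where "t \<in> divisor_tuples" "assignment d \<in> assignments t"
    using assignment_type[of "assignment d"] assignment_bounds[OF d(1)] assignment_extensional
    by blast
  ultimately show "x \<in> (\<Union>t\<in>divisor_tuples. \<Union>f\<in>assignments t. box (prime_tuple P f))"
    using d(2) by blast
qed

lemma level_eqI:
  assumes "j \<le> k" "Z j < i" "i \<le> Z (Suc j)"
  shows "level i = j"
  unfolding level_def
proof (rule Greatest_equality)
  fix j' assume "j' \<le> k \<and> Z j' < i"
  then show "j' \<le> j" using Z_le_Z[of "Suc j" j'] assms by (cases "j' \<le> j") auto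
qed (use assms in simp)

lemma le_level: "j \<le> k \<Longrightarrow> Z j < i \<Longrightarrow> j \<le> level i"
  unfolding level_def by (rule Greatest_le_nat[where b = k]) auto

lemma level_le: "1 \<le> i \<Longrightarrow> level i \<le> k"
  unfolding level_def by (rule conjunct1, rule GreatestI_ex_nat[where b = k]) (use Z_0 in auto)

lemma prod_level: "(\<Prod>i\<in>{1..k}. h (level i)) = (\<Prod>j=0..k. h j ^ (Z (Suc j) - Z j))"
proof -
  have "(\<Prod>i\<in>{1..k}. h (level i)) = (\<Prod>i\<in>{Z 0<..Z (Suc k)}. h (level i))"
    using Z_0 Z_Suc_k by (simp add: atLeastSucAtMost_greaterThanAtMost)
  also have "\<dots> = (\<Prod>j\<le>k. \<Prod>i\<in>{Z j<..Z (Suc j)}. h (level i))"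
    using Z_mono by (rule prod_consecutive_blocks)
  also have "\<dots> = (\<Prod>j\<le>k. \<Prod>i\<in>{Z j<..Z (Suc j)}. h j)"
    using level_eqI by (intro prod.cong) auto
  also have "\<dots> = (\<Prod>j=0..k. h j ^ (Z (Suc j) - Z j))" by (simp add: atLeast0AtMost)
  finally show ?thesis .
qed

lemma log_volume_nonneg: "0 \<le> log_volume"
  unfolding log_volume_def
proof (intro prod_nonneg zero_le_power ln_ge_zero)
  fix j assume "j \<in> {0..k}"
  then have "1 \<le> real (A j)" by (intro A_ge_1) simp
  then show "1 \<le> 2 * real (A j)" by simp
qed

lemma measure_wide_box:
  shows "wide_box s \<in> fmeasurable Leb" and "measure Leb (wide_box s) = log_volume"
proof -
  have len: "ln (real (s i)) + ln (real (A (level i))) - (ln (real (s i)) - ln 2)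
      = ln (2 * real (A (level i)))" if "i \<in> {1..k}" for i
    using A_pos[OF level_le] that by (simp add: ln_mult)
  have le: "ln (real (s i)) - ln 2 \<le> ln (real (s i)) + ln (real (A (level i)))"
    if "i \<in> {1..k}" for i
  proof -
    have "0 \<le> ln (real (A (level i)))" using that by (intro ln_ge_zero A_ge_1 level_le) simp
    moreover have "0 < ln (2 :: real)" by simp
    ultimately show ?thesis by linarith
  qed
  then show "wide_box s \<in> fmeasurable Leb"
    unfolding wide_box_def by (intro measure_PiM_lborel_box) auto
  have "measure Leb (wide_box s)
      = (\<Prod>i\<in>{1..k}. ln (real (s i)) + ln (real (A (level i))) - (ln (real (s i)) - ln 2))"
    unfolding wide_box_def using le by (intro measure_PiM_lborel_box) auto
  also have "\<dots> = (\<Prod>i\<in>{1..k}. ln (2 * real (A (level i))))" using len by simp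
  also have "\<dots> = log_volume" unfolding log_volume_def by (rule prod_level)
  finally show "measure Leb (wide_box s) = log_volume" .
qed

lemma high_part_dvd_A:
  assumes "f \<in> assignments t"
  shows "\<Prod>{p \<in> P - low_primes t. f p = i} dvd A (level i)"
proof (rule prod_primes_dvd)
  show "finite {p \<in> P - low_primes t. f p = i}" by simp
  fix p assume "p \<in> {p \<in> P - low_primes t. f p = i}"
  then have p: "p \<in> P" "\<not> p dvd t (idx p)" "f p = i" unfolding low_primes_def by auto
  then show "prime p" using prime_of_P by simp
  have "Z (idx p) < i" using p assms unfolding assignments_def by (auto simp: PiE_iff)
  then have "idx p \<le> level i" using le_level idx_in_range[OF p(1)] by simp
  then have "a (idx p) dvd A (level i)" using a_dvd_A idx_in_range[OF p(1)] by simp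
  then show "p dvd A (level i)" using dvd_a_idx[OF p(1)] by (rule dvd_trans[rotated])
qed

lemma box_subset_wide_box:
  assumes "f \<in> assignments t"
  shows "box (prime_tuple P f) \<subseteq> wide_box (prime_tuple (low_primes t) f)"
  unfolding box_def wide_box_def
proof (intro PiE_mono)
  fix i assume i: "i \<in> {1..k}"
  define S where "S = prime_tuple (low_primes t) f i"
  define R where "R = \<Prod>{p \<in> P - low_primes t. f p = i}"
  have split: "{p \<in> P. f p = i} = {p \<in> low_primes t. f p = i} \<union> {p \<in> P - low_primes t. f p = i}"
    unfolding low_primes_def by auto
  have "prime_tuple P f i = S * R"
    unfolding prime_tuple_def S_def R_def split by (rule prod.union_disjoint) auto
  moreover have "0 < S" unfolding S_def by (intro prime_tuple_pos) (auto simp: low_primes_def)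
  moreover have "0 < R" unfolding R_def using prime_of_P by (intro prod_pos) (auto intro: prime_gt_0_nat)
  moreover have "R \<le> A (level i)"
    unfolding R_def using high_part_dvd_A[OF assms] A_pos level_le i by (intro dvd_imp_le) auto
  ultimately show "{ln (real (prime_tuple P f i) / 2)..<ln (real (prime_tuple P f i))}
      \<subseteq> {ln (real S) - ln 2..<ln (real S) + ln (real (A (level i)))}"
    by (auto simp: ln_mult ln_div)
qed

lemma type_boxes_subset_wide_boxes:
  "(\<Union>f\<in>assignments t. box (prime_tuple P f))
    \<subseteq> (\<Union>g\<in>low_assignments t. wide_box (prime_tuple (low_primes t) g))"
proof (intro UN_least)
  fix f assume f: "f \<in> assignments t"
  have "restrict f (low_primes t) \<in> low_assignments t"
    using f unfolding assignments_def low_assignments_def low_primes_def by (auto simp: PiE_iff)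
  moreover have "prime_tuple (low_primes t) (restrict f (low_primes t)) = prime_tuple (low_primes t) f"
    unfolding prime_tuple_def by (intro ext arg_cong[where f = Prod]) auto
  ultimately have "wide_box (prime_tuple (low_primes t) f)
      \<subseteq> (\<Union>g\<in>low_assignments t. wide_box (prime_tuple (low_primes t) g))"
    by (metis UN_upper)
  with box_subset_wide_box[OF f]
  show "box (prime_tuple P f) \<subseteq> (\<Union>g\<in>low_assignments t. wide_box (prime_tuple (low_primes t) g))"
    by (rule subset_trans)
qed

lemma measure_type_boxes:
  "measure Leb (\<Union>f\<in>assignments t. box (prime_tuple P f))
    \<le> min (card (low_assignments t) * log_volume) (card (assignments t) * ln 2 ^ k)"
proof (intro min.boundedI)
  have "measure Leb (\<Union>f\<in>assignments t. box (prime_tuple P f))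
      \<le> (\<Sum>g\<in>low_assignments t. measure Leb (wide_box (prime_tuple (low_primes t) g)))"
    by (rule measure_le_sum_of_cover[OF finite_low_assignments type_boxes_subset_wide_boxes
          measure_wide_box(1)])
  also have "\<dots> = card (low_assignments t) * log_volume"
    by (simp only: measure_wide_box(2) sum_constant)
  finally show "measure Leb (\<Union>f\<in>assignments t. box (prime_tuple P f))
      \<le> card (low_assignments t) * log_volume" .
next
  have "measure Leb (\<Union>f\<in>assignments t. box (prime_tuple P f))
      \<le> (\<Sum>f\<in>assignments t. measure Leb (box (prime_tuple P f)))"
    by (rule measure_le_sum_of_cover[OF finite_assignments subset_refl])
       (rule measure_box, rule prime_tuple_pos, rule subset_refl)
  also have "\<dots> = (\<Sum>f\<in>assignments t. ln 2 ^ k)"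
    by (intro sum.cong refl measure_box(2) prime_tuple_pos subset_refl)
  also have "\<dots> = card (assignments t) * ln 2 ^ k" by simp
  finally show "measure Leb (\<Union>f\<in>assignments t. box (prime_tuple P f))
      \<le> card (assignments t) * ln 2 ^ k" .
qed

theorem Lk_le:
  "Lk k a \<le> (\<Sum>t\<in>divisor_tuples.
      (\<Prod>j=1..k. real (Z j + 1 - j) ^ omega (t j)) *
      min log_volume (ln 2 ^ k * (\<Prod>j=1..k. real (Suc k - Z j) ^ omega (a j div t j))))"
proof -
  have "Lk k a \<le> (\<Sum>t\<in>divisor_tuples. measure Leb (\<Union>f\<in>assignments t. box (prime_tuple P f)))"
    unfolding Lk_eq using finite_divisor_tuples admissible_boxes_covered
    by (intro measure_le_sum_of_cover fmeasurable.finite_UN finite_assignments measure_box prime_tuple_pos) auto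
  also have "\<dots> \<le> (\<Sum>t\<in>divisor_tuples. min (card (low_assignments t) * log_volume) (card (assignments t) * ln 2 ^ k))"
    by (intro sum_mono measure_type_boxes)
  also have "\<dots> = (\<Sum>t\<in>divisor_tuples.
      (\<Prod>j=1..k. real (Z j + 1 - j) ^ omega (t j)) *
      min log_volume (ln 2 ^ k * (\<Prod>j=1..k. real (Suc k - Z j) ^ omega (a j div t j))))"
    using log_volume_nonneg
    by (intro sum.cong refl)
       (simp add: card_assignments card_low_assignments prod.distrib min_mult_distrib_left prod_nonneg mult_ac)
  finally show ?thesis .
qed

corollary Lk_le_int:
  fixes z :: "nat \<Rightarrow> int"
  assumes z_eq: "\<And>j. j \<le> Suc k \<Longrightarrow> z j = int (Z j)"
    and z_lower: "\<And>j. j \<in> {1..k} \<Longrightarrow> int j - 1 \<le> z j"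
  shows "Lk k a \<le>
    (\<Sum>d \<in> PiE {1..k} (\<lambda>j. {e. e dvd a j}).
       (\<Prod>j=1..k. (real_of_int (z j - int j + 1)) ^ omega (d j)) *
       min (\<Prod>j=0..k. (ln (2 * real (\<Prod>i=1..j. a i))) ^ nat (z (j + 1) - z j))
           ((ln 2) ^ k * (\<Prod>j=1..k. (real_of_int (int k - z j + 1)) ^ omega (a j div d j))))"
proof -
  have low: "real (Z j + 1 - j) = real_of_int (z j - int j + 1)" if "j \<in> {1..k}" for j
    using z_lower[OF that] z_eq[of j] that by (simp add: of_nat_diff)
  have high: "real (Suc k - Z j) = real_of_int (int k - z j + 1)" if "j \<in> {1..k}" for j
  proof -
    have "Z j \<le> k" using Z_le_Z[of j "Suc k"] Z_Suc_k that by simp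
    then show ?thesis using z_eq[of j] that by (simp add: of_nat_diff)
  qed
  have vol: "log_volume = (\<Prod>j=0..k. ln (2 * real (\<Prod>i=1..j. a i)) ^ nat (z (j + 1) - z j))"
    unfolding log_volume_def A_def using z_eq by (intro prod.cong refl) (simp add: nat_minus_as_int)
  show ?thesis
    using Lk_le unfolding divisor_tuples_def vol by (simp only: low high cong: prod.cong sum.cong)
qed

end

lemma nonneg_of_mono_from_zero:
  fixes z :: "nat \<Rightarrow> int"
  assumes "z 0 = 0" "\<And>i. i \<le> k \<Longrightarrow> z i \<le> z (Suc i)" "j \<le> Suc k"
  shows "0 \<le> z j"
proof -
  have "z 0 \<le> z j" by (rule lift_Suc_mono_le_ivl[of "{..k}" z 0 j]) (use assms in auto)
  with assms(1) show ?thesis by simp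
qed

theorem lemma2p3:
  fixes k :: nat and z :: "nat \<Rightarrow> int" and a :: "nat \<Rightarrow> nat"
  assumes "z 0 = 0" and "z (k + 1) = int k"
    and "\<forall>i\<le>k. z i \<le> z (Suc i)"
    and "\<forall>i\<in>{1..k}. z i \<ge> int i - 1"
    and "\<forall>j\<in>{1..k}. a j \<ge> 1"
    and "squarefree (\<Prod>j=1..k. a j)"
  shows "Lk k a \<le>
    (\<Sum>d \<in> PiE {1..k} (\<lambda>j. {e. e dvd a j}).
       (\<Prod>j=1..k. (real_of_int (z j - int j + 1)) ^ omega (d j)) *
       min (\<Prod>j=0..k. (ln (2 * real (\<Prod>i=1..j. a i))) ^ nat (z (j + 1) - z j))
           ((ln 2) ^ k * (\<Prod>j=1..k. (real_of_int (int k - z j + 1)) ^ omega (a j div d j))))"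
proof -
  define Z where "Z j = nat (z j)" for j
  have z_eq: "z j = int (Z j)" if "j \<le> Suc k" for j
  proof -
    have "0 \<le> z j" using assms(1,3) that by (intro nonneg_of_mono_from_zero[of z k]) auto
    then show ?thesis unfolding Z_def by simp
  qed
  interpret squarefree_tuple_thresholds k a Z
  proof
    show "\<And>j. j \<in> {1..k} \<Longrightarrow> 0 < a j" using assms(5) by (force simp: Suc_le_eq)
    show "squarefree (\<Prod>j=1..k. a j)" by (rule assms(6))
    show "Z 0 = 0" "Z (Suc k) = k" using assms(1,2) by (simp_all add: Z_def)
    show "\<And>i. i \<le> k \<Longrightarrow> Z i \<le> Z (Suc i)" using assms(3) by (simp add: Z_def nat_mono)
  qed
  show ?thesis using Lk_le_int z_eq assms(4) by simp
qed

end
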